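(* Let $R_1,\dots,R_6$ be six rods in $\mathbb{R}^3$ ($n_r^i=1$ for all $i$) in generic position. Suppose they intersect in the strutted configuration in which each of $R_3,R_4,R_5,R_6$ joins $R_1$ to $R_2$: there are points $\mathbf p_1\in R_1\cap R_3$, $\mathbf p_2\in R_2\cap R_3$, $\mathbf p_3\in R_1\cap R_4$, $\mathbf p_4\in R_2\cap R_4$, $\mathbf p_5\in R_1\cap R_5$, $\mathbf p_6\in R_2\cap R_5$, $\mathbf p_7\in R_1\cap R_6$, $\mathbf p_8\in R_2\cap R_6$. Then the composite body $R_1\cup\cdots\cup R_6$ is rigid.
   Context: A rod is a straight segment in $\mathbb{R}^3$ that moves as a rigid body; $n_r^i$ denotes the number of rods in component $R_i$. Positions are generic apart from the stated incidences. A union of rods is rigid if it is infinitesimally rigid in the following sense. An infinitesimal motion is admissible if it preserves, to first order, distances between points on each rod, and if points lying on a common rod keep fixed relative position along the rod to first order. For example, $\mathbf p_3$ and $\mathbf p_5$ stay fixed relative to $\mathbf p_1,\mathbf p_7$ on $R_1$, and $\mathbf p_4,\mathbf p_6$ stay fixed relative to $\mathbf p_2,\mathbf p_8$ on $R_2$. The union is rigid if every admissible infinitesimal motion is a Euclidean rigid motion of the whole union. Equivalently, the composite rigidity matrix has a right nullspace of dimension $6$. *)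

theory Defs
  imports "HOL-Analysis.Analysis"
begin

definition euclid_motion_on :: "(real^3) set \<Rightarrow> (real^3 \<Rightarrow> real^3) \<Rightarrow> bool" where
  "euclid_motion_on S u \<longleftrightarrow> (\<exists>\<omega> v. \<forall>x\<in>S. u x = cross3 \<omega> x + v)"

text \<open>Admissible infinitesimal motion of a union of rods R i (i in I): each rod
  moves as a rigid body (velocity field u i on the rod), and every point common
  to two rods has the same velocity as a point of either rod (it keeps its fixed
  position along each rod).\<close>
definition admissible_motion ::
  "nat set \<Rightarrow> (nat \<Rightarrow> (real^3) set) \<Rightarrow> (nat \<Rightarrow> real^3 \<Rightarrow> real^3) \<Rightarrow> bool" where
  "admissible_motion I R u \<longleftrightarrow>
     (\<forall>i\<in>I. euclid_motion_on (R i) (u i)) \<and>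
     (\<forall>i\<in>I. \<forall>j\<in>I. \<forall>x\<in>R i \<inter> R j. u i x = u j x)"

definition rigid_union :: "nat set \<Rightarrow> (nat \<Rightarrow> (real^3) set) \<Rightarrow> bool" where
  "rigid_union I R \<longleftrightarrow>
     (\<forall>u. admissible_motion I R u \<longrightarrow>
        (\<exists>\<omega> v. \<forall>i\<in>I. \<forall>x\<in>R i. u i x = cross3 \<omega> x + v))"

text \<open>Parameters of the strutted configuration: R1 is the line a + t d carrying
  p1,p3,p5,p7 (parameters t$1..t$4), R2 is the line b + s e carrying p2,p4,p6,p8
  (parameters s$1..s$4).\<close>
type_synonym strut_param = "(real^3) \<times> (real^3) \<times> (real^3) \<times> (real^3) \<times> (real^4) \<times> (real^4)"

definition strut_pt1 :: "strut_param \<Rightarrow> 4 \<Rightarrow> real^3" where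
  "strut_pt1 \<theta> k = (case \<theta> of (a, d, b, e, t, s) \<Rightarrow> a + (t $ k) *\<^sub>R d)"

definition strut_pt2 :: "strut_param \<Rightarrow> 4 \<Rightarrow> real^3" where
  "strut_pt2 \<theta> k = (case \<theta> of (a, d, b, e, t, s) \<Rightarrow> b + (s $ k) *\<^sub>R e)"

definition strut_rods :: "strut_param \<Rightarrow> nat \<Rightarrow> (real^3) set" where
  "strut_rods \<theta> i =
     (if i = 1 then convex hull (range (strut_pt1 \<theta>))
      else if i = 2 then convex hull (range (strut_pt2 \<theta>))
      else if i = 3 then closed_segment (strut_pt1 \<theta> 1) (strut_pt2 \<theta> 1)
      else if i = 4 then closed_segment (strut_pt1 \<theta> 2) (strut_pt2 \<theta> 2)
      else if i = 5 then closed_segment (strut_pt1 \<theta> 3) (strut_pt2 \<theta> 3)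
      else if i = 6 then closed_segment (strut_pt1 \<theta> 4) (strut_pt2 \<theta> 4)
      else {})"

end

theory Submission
  imports Defs
begin

text \<open>Write \<open>R\<^sub>1 \<subseteq> a + \<real>d\<close>, \<open>R\<^sub>2 \<subseteq> b + \<real>e\<close> and let rod \<open>i\<close> move with velocity \<open>x \<mapsto> W\<^sub>i \<times> x + V\<^sub>i\<close>.
  A strut from \<open>p = a + t d\<close> to \<open>q = b + s e\<close> keeps its length, so the relative motion
  \<open>(\<Omega>, V) = (W\<^sub>2 - W\<^sub>1, V\<^sub>2 - V\<^sub>1)\<close> satisfies \<open>(\<Omega> \<times> q + V) \<bullet> (q - p) = 0\<close>, which expands to
  \<open>g\<^sub>0 + g\<^sub>1 s + g\<^sub>2 t + g\<^sub>3 s t = 0\<close> with coefficients linear in \<open>(\<Omega>, V)\<close>. Four such equations force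
  all \<open>g\<^sub>i = 0\<close> unless the points \<open>(s\<^sub>k, t\<^sub>k, s\<^sub>k t\<^sub>k)\<close> on the saddle \<open>z = s t\<close> are coplanar, and
  \<open>g = 0\<close> for skew lines forces the relative motion to be a sum of rotations about \<open>R\<^sub>1\<close> and
  \<open>R\<^sub>2\<close>; such a motion extends to one Euclidean motion of all six rods.

  Both exceptional conditions are zero sets of polynomials in the parameters, and these are null:
  each polynomial is affine in one coordinate, so away from the zero set of its slope its zero set
  is a graph over a hyperplane; the slopes form a chain ending in a nonzero constant.\<close>

unbundle cross3_syntax

lemma real_polynomial_function_vec_nth:
  "bounded_linear f \<Longrightarrow> real_polynomial_function (\<lambda>x. f x $ i)"
  by (intro real_polynomial_function.intros(1) bounded_linear_vec_nth[THEN bounded_linear_compose])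

lemma negligible_zero_set_affine_along:
  fixes f k :: "'a::euclidean_space \<Rightarrow> real"
  assumes v: "v \<noteq> 0" and f: "real_polynomial_function f"
    and affine: "\<And>x y. f (x + y *\<^sub>R v) = f x + y * k x"
    and k_zeros: "negligible {x. k x = 0}"
  shows "negligible {x. f x = 0}"
proof -
  have k_eq: "k x = f (x + v) - f x" for x
    using affine[of x 1] by simp
  have k_along: "k (x + y *\<^sub>R v) = k x" for x y
    using affine[of x "y + 1"] affine[of x y] affine[of "x + y *\<^sub>R v" 1]
    by (simp add: k_eq algebra_simps)
  have k: "real_polynomial_function k"
    unfolding k_eq[abs_def] using f
    by (intro real_polynomial_function_diff real_polynomial_function_compose[unfolded o_def, of "\<lambda>x. x + v"]) auto
  define H where "H = {x. v \<bullet> x = 0}"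
  \<comment> \<open>For \<open>x \<in> H\<close> with \<open>k x \<noteq> 0\<close>, the line \<open>x + \<real>v\<close> meets the zero set of \<open>f\<close> exactly at \<open>\<phi> x\<close>.\<close>
  define \<phi> where "\<phi> x = x - (f x / k x) *\<^sub>R v" for x
  have "{x. f x = 0} \<subseteq> \<phi> ` (H \<inter> {x. k x \<noteq> 0}) \<union> {x. k x = 0}"
  proof
    fix z assume "z \<in> {x. f x = 0}"
    then have fz: "f z = 0" by simp
    define c where "c = (v \<bullet> z) / (v \<bullet> v)"
    define x where "x = z - c *\<^sub>R v"
    have x_H: "x \<in> H" using v by (simp add: H_def x_def c_def inner_diff_right)
    have z: "z = x + c *\<^sub>R v" by (simp add: x_def)
    have kx: "k x = k z" using k_along[of x c] z by simp
    show "z \<in> \<phi> ` (H \<inter> {x. k x \<noteq> 0}) \<union> {x. k x = 0}"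
    proof (cases "k z = 0")
      case False
      have "f x + c * k x = 0" using affine[of x c] fz z by simp
      then have "f x / k x = - c" using False kx by (simp add: field_simps)
      then have "\<phi> x = z" by (simp add: \<phi>_def z)
      with x_H False kx show ?thesis by (auto intro: image_eqI[of _ _ x])
    qed simp
  qed
  moreover have "negligible (\<phi> ` (H \<inter> {x. k x \<noteq> 0}))"
  proof (rule negligible_differentiable_image_negligible)
    show "negligible (H \<inter> {x. k x \<noteq> 0})"
      using negligible_hyperplane[of v 0] v by (simp add: H_def negligible_Int)
    show "\<phi> differentiable_on H \<inter> {x. k x \<noteq> 0}"
      unfolding \<phi>_def differentiable_on_def
      using differentiable_at_real_polynomial_function[OF f] differentiable_at_real_polynomial_function[OF k]
      by (auto intro!: derivative_intros)
  qed simp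
  ultimately show ?thesis
    using k_zeros negligible_subset by (metis negligible_Un)
qed

lemma cross3_basis_expansion:
  fixes c d e x :: "real^3"
  shows "(c \<bullet> (d \<times> e)) *\<^sub>R x = (x \<bullet> (d \<times> e)) *\<^sub>R c + (x \<bullet> (e \<times> c)) *\<^sub>R d + (x \<bullet> (c \<times> d)) *\<^sub>R e"
  by (simp add: cross3_simps forall_3)

lemma cross3_dual_basis_expansion:
  fixes c d e x :: "real^3"
  shows "(c \<bullet> (d \<times> e)) *\<^sub>R x = (x \<bullet> c) *\<^sub>R (d \<times> e) + (x \<bullet> d) *\<^sub>R (e \<times> c) + (x \<bullet> e) *\<^sub>R (c \<times> d)"
  by (simp add: cross3_simps forall_3)

lemma orthogonal_to_basis_eq_0:
  fixes c d e x :: "real^3"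
  assumes "c \<bullet> (d \<times> e) \<noteq> 0" "x \<bullet> c = 0" "x \<bullet> d = 0" "x \<bullet> e = 0"
  shows "x = 0"
  using cross3_dual_basis_expansion[of c d e x] assms by simp

lemma affine_functional_vanishing_on_tetrahedron:
  fixes p1 p2 p3 p4 g :: "real^3"
  assumes "(p2 - p1) \<bullet> ((p3 - p1) \<times> (p4 - p1)) \<noteq> 0"
    and "c + g \<bullet> p1 = 0" "c + g \<bullet> p2 = 0" "c + g \<bullet> p3 = 0" "c + g \<bullet> p4 = 0"
  shows "g = 0 \<and> c = 0"
proof -
  have "g = 0"
    by (rule orthogonal_to_basis_eq_0[OF assms(1)]) (use assms(2-5) in \<open>simp_all add: inner_diff_right\<close>)
  with assms(2) show ?thesis by simp
qed

lemma rigid_velocity_eq_on_closed_segment: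
  fixes w v w' v' p q x :: "real^3"
  assumes "w \<times> p + v = w' \<times> p + v'" "w \<times> q + v = w' \<times> q + v'" "x \<in> closed_segment p q"
  shows "w \<times> x + v = w' \<times> x + v'"
proof -
  obtain l where x: "x = (1 - l) *\<^sub>R p + l *\<^sub>R q"
    using assms(3) unfolding closed_segment_def by blast
  have "c \<times> x + z = (1 - l) *\<^sub>R (c \<times> p + z) + l *\<^sub>R (c \<times> q + z)" for c z
    unfolding x by (simp add: cross3_simps forall_3)
  from this[of w v] this[of w' v'] show ?thesis using assms(1,2) by simp
qed

lemma strut_velocity_constraint:
  fixes w v w1 v1 w2 v2 p q :: "real^3"
  assumes "w1 \<times> p + v1 = w \<times> p + v" "w2 \<times> q + v2 = w \<times> q + v"
  shows "((w2 - w1) \<times> q + (v2 - v1)) \<bullet> (q - p) = 0"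
proof -
  have "(w2 - w1) \<times> q + (v2 - v1) = (w - w1) \<times> (q - p)"
    using assms by (simp add: cross3_simps forall_3)
  then show ?thesis by (simp add: dot_cross_self)
qed

lemma convex_hull_points_on_line:
  fixes a d :: "'a::real_vector"
  shows "convex hull (range (\<lambda>k. a + c k *\<^sub>R d)) \<subseteq> range (\<lambda>\<tau>. a + \<tau> *\<^sub>R d)"
proof (rule hull_minimal)
  have "range (\<lambda>\<tau>. a + \<tau> *\<^sub>R d) = (+) a ` span {d}"
    by (auto simp: span_singleton)
  then show "convex (range (\<lambda>\<tau>. a + \<tau> *\<^sub>R d))"
    by (simp add: subspace_imp_convex)
qed auto

definition saddle_lift :: "real^4 \<Rightarrow> real^4 \<Rightarrow> 4 \<Rightarrow> real^3" where
  "saddle_lift s t k = vector [s$k, t$k, s$k * t$k]"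

definition saddle_volume :: "real^4 \<Rightarrow> real^4 \<Rightarrow> real" where
  "saddle_volume s t = (saddle_lift s t 2 - saddle_lift s t 1) \<bullet>
     ((saddle_lift s t 3 - saddle_lift s t 1) \<times> (saddle_lift s t 4 - saddle_lift s t 1))"

lemma relative_motion_between_skew_lines:
  fixes \<Omega> V a d b e :: "real^3"
  assumes T: "(b - a) \<bullet> (d \<times> e) \<noteq> 0"
    and g0: "\<Omega> \<bullet> (a \<times> b) + V \<bullet> (b - a) = 0"
    and g1: "\<Omega> \<bullet> (a \<times> e) + V \<bullet> e = 0"
    and g2: "\<Omega> \<bullet> (d \<times> b) - V \<bullet> d = 0"
    and g3: "\<Omega> \<bullet> (d \<times> e) = 0"
  obtains \<alpha> \<beta> where "\<And>x. \<Omega> \<times> x + V = \<alpha> *\<^sub>R (d \<times> (x - a)) + \<beta> *\<^sub>R (e \<times> (x - b))"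
proof -
  define c where "c = b - a"
  define \<alpha> where "\<alpha> = (\<Omega> \<bullet> (e \<times> c)) / (c \<bullet> (d \<times> e))"
  define \<beta> where "\<beta> = (\<Omega> \<bullet> (c \<times> d)) / (c \<bullet> (d \<times> e))"
  have "(c \<bullet> (d \<times> e)) *\<^sub>R \<Omega> = (c \<bullet> (d \<times> e)) *\<^sub>R (\<alpha> *\<^sub>R d + \<beta> *\<^sub>R e)"
    using cross3_basis_expansion[of c d e \<Omega>] g3 T by (simp add: \<alpha>_def \<beta>_def c_def scaleR_right_distrib)
  then have \<Omega>: "\<Omega> = \<alpha> *\<^sub>R d + \<beta> *\<^sub>R e" using T by (simp add: c_def)
  define V' where "V' = V - (\<alpha> *\<^sub>R (a \<times> d) + \<beta> *\<^sub>R (b \<times> e))"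
  have "V' \<bullet> c = \<Omega> \<bullet> (a \<times> b) + V \<bullet> (b - a)" "V' \<bullet> d = - (\<Omega> \<bullet> (d \<times> b) - V \<bullet> d)"
    "V' \<bullet> e = \<Omega> \<bullet> (a \<times> e) + V \<bullet> e"
    unfolding V'_def c_def \<Omega> by (simp_all add: cross3_simps forall_3)
  then have "V' \<bullet> c = 0" "V' \<bullet> d = 0" "V' \<bullet> e = 0" using g0 g1 g2 by simp_all
  then have "V' = 0" using orthogonal_to_basis_eq_0 T by (simp add: c_def)
  then have "\<Omega> \<times> x + V = \<alpha> *\<^sub>R (d \<times> (x - a)) + \<beta> *\<^sub>R (e \<times> (x - b))" for x
    unfolding V'_def \<Omega> by (simp add: cross3_simps forall_3)
  then show ?thesis by (rule that)
qed

lemma relative_motion_of_strutted_lines: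
  fixes \<Omega> V a d b e :: "real^3" and t s :: "real^4"
  assumes T: "(b - a) \<bullet> (d \<times> e) \<noteq> 0" and S: "saddle_volume s t \<noteq> 0"
    and struts: "\<And>k. (\<Omega> \<times> (b + s$k *\<^sub>R e) + V) \<bullet> ((b + s$k *\<^sub>R e) - (a + t$k *\<^sub>R d)) = 0"
  obtains \<alpha> \<beta> where "\<And>x. \<Omega> \<times> x + V = \<alpha> *\<^sub>R (d \<times> (x - a)) + \<beta> *\<^sub>R (e \<times> (x - b))"
proof -
  define g0 where "g0 = \<Omega> \<bullet> (a \<times> b) + V \<bullet> (b - a)"
  define g where "g = (vector [\<Omega> \<bullet> (a \<times> e) + V \<bullet> e, \<Omega> \<bullet> (d \<times> b) - V \<bullet> d, \<Omega> \<bullet> (d \<times> e)] :: real^3)"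
  have "(\<Omega> \<times> (b + \<sigma> *\<^sub>R e) + V) \<bullet> ((b + \<sigma> *\<^sub>R e) - (a + \<tau> *\<^sub>R d)) = g0 + g \<bullet> vector [\<sigma>, \<tau>, \<sigma> * \<tau>]"
    for \<sigma> \<tau> unfolding g0_def g_def by (simp add: cross3_simps)
  then have "g0 + g \<bullet> saddle_lift s t k = 0" for k
    using struts[of k] by (simp add: saddle_lift_def)
  then have "g = 0 \<and> g0 = 0"
    using S unfolding saddle_volume_def by (intro affine_functional_vanishing_on_tetrahedron)
  then have "\<Omega> \<bullet> (a \<times> b) + V \<bullet> (b - a) = 0" "\<Omega> \<bullet> (a \<times> e) + V \<bullet> e = 0"
    "\<Omega> \<bullet> (d \<times> b) - V \<bullet> d = 0" "\<Omega> \<bullet> (d \<times> e) = 0"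
    by (simp_all add: g0_def g_def vec_eq_iff forall_3)
  then show ?thesis using relative_motion_between_skew_lines[OF T] that by blast
qed

lemma rigid_motion_of_strutted_lines:
  fixes W1 V1 W2 V2 a d b e :: "real^3" and t s :: "real^4"
  assumes T: "(b - a) \<bullet> (d \<times> e) \<noteq> 0" and S: "saddle_volume s t \<noteq> 0"
    and struts: "\<And>k. ((W2 - W1) \<times> (b + s$k *\<^sub>R e) + (V2 - V1)) \<bullet> ((b + s$k *\<^sub>R e) - (a + t$k *\<^sub>R d)) = 0"
  obtains \<omega> v where "\<And>\<tau>. W1 \<times> (a + \<tau> *\<^sub>R d) + V1 = \<omega> \<times> (a + \<tau> *\<^sub>R d) + v"
    and "\<And>\<sigma>. W2 \<times> (b + \<sigma> *\<^sub>R e) + V2 = \<omega> \<times> (b + \<sigma> *\<^sub>R e) + v"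
proof -
  obtain \<alpha> \<beta> where
    relative: "\<And>x. (W2 - W1) \<times> x + (V2 - V1) = \<alpha> *\<^sub>R (d \<times> (x - a)) + \<beta> *\<^sub>R (e \<times> (x - b))"
    using relative_motion_of_strutted_lines[OF T S struts] by blast
  define \<omega> where "\<omega> = W1 + \<alpha> *\<^sub>R d"
  define v where "v = V1 - \<alpha> *\<^sub>R (d \<times> a)"
  have motion: "\<omega> \<times> x + v = W1 \<times> x + V1 + \<alpha> *\<^sub>R (d \<times> (x - a))" for x
    by (simp add: \<omega>_def v_def cross3_simps forall_3)
  have on_line2: "W2 \<times> x + V2 = \<omega> \<times> x + v" if "e \<times> (x - b) = 0" for x
  proof -
    have "W2 \<times> x + V2 = W1 \<times> x + V1 + \<alpha> *\<^sub>R (d \<times> (x - a))"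
      using relative[of x] that by (simp add: Cross3.left_diff_distrib algebra_simps)
    then show ?thesis by (simp add: motion)
  qed
  show ?thesis
  proof (rule that)
    show "W1 \<times> (a + \<tau> *\<^sub>R d) + V1 = \<omega> \<times> (a + \<tau> *\<^sub>R d) + v" for \<tau>
      by (simp add: motion cross_mult_right)
    show "W2 \<times> (b + \<sigma> *\<^sub>R e) + V2 = \<omega> \<times> (b + \<sigma> *\<^sub>R e) + v" for \<sigma>
      by (rule on_line2) (simp add: cross_mult_right)
  qed
qed

lemma admissible_motion_velocities:
  assumes "admissible_motion I R u"
  obtains W V where "\<And>i x. i \<in> I \<Longrightarrow> x \<in> R i \<Longrightarrow> u i x = W i \<times> x + V i"
    and "\<And>i j x. i \<in> I \<Longrightarrow> j \<in> I \<Longrightarrow> x \<in> R i \<Longrightarrow> x \<in> R j \<Longrightarrow> W i \<times> x + V i = W j \<times> x + V j"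
proof -
  have "\<forall>i\<in>I. \<exists>w v. \<forall>x\<in>R i. u i x = w \<times> x + v"
    using assms unfolding admissible_motion_def euclid_motion_on_def by blast
  then obtain W V where WV: "\<forall>i\<in>I. \<forall>x\<in>R i. u i x = W i \<times> x + V i"
    by metis
  show ?thesis
  proof (rule that)
    show "u i x = W i \<times> x + V i" if "i \<in> I" "x \<in> R i" for i x
      using WV that by blast
    show "W i \<times> x + V i = W j \<times> x + V j" if "i \<in> I" "j \<in> I" "x \<in> R i" "x \<in> R j" for i j x
    proof -
      have "u i x = u j x" using assms that unfolding admissible_motion_def by blast
      then show ?thesis using WV that by simp
    qed
  qed
qed

lemma strut_rods_strut:
  "\<exists>i\<in>{1..6}. strut_rods \<theta> i = closed_segment (strut_pt1 \<theta> k) (strut_pt2 \<theta> k)"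
proof -
  have "strut_rods \<theta> 3 = closed_segment (strut_pt1 \<theta> 1) (strut_pt2 \<theta> 1)"
    "strut_rods \<theta> 4 = closed_segment (strut_pt1 \<theta> 2) (strut_pt2 \<theta> 2)"
    "strut_rods \<theta> 5 = closed_segment (strut_pt1 \<theta> 3) (strut_pt2 \<theta> 3)"
    "strut_rods \<theta> 6 = closed_segment (strut_pt1 \<theta> 4) (strut_pt2 \<theta> 4)"
    by (simp_all add: strut_rods_def)
  with exhaust_4[of k] show ?thesis by fastforce
qed

lemma strut_rods_cases:
  assumes "i \<in> {1..6}"
  shows "i = 1 \<or> i = 2 \<or> (\<exists>k. strut_rods \<theta> i = closed_segment (strut_pt1 \<theta> k) (strut_pt2 \<theta> k))"
  using assms by (auto simp: strut_rods_def eval_nat_numeral le_Suc_eq)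

lemma strut_pt1_mem_strut_rods: "strut_pt1 \<theta> k \<in> strut_rods \<theta> 1"
  unfolding strut_rods_def by (simp add: hull_inc)

lemma strut_pt2_mem_strut_rods: "strut_pt2 \<theta> k \<in> strut_rods \<theta> 2"
  unfolding strut_rods_def by (simp add: hull_inc)

lemma strut_rods_1_on_line:
  assumes "x \<in> strut_rods (a, d, b, e, t, s) 1"
  obtains \<tau> where "x = a + \<tau> *\<^sub>R d"
  using assms convex_hull_points_on_line[of a "($) t" d]
  by (auto simp: strut_rods_def strut_pt1_def[abs_def])

lemma strut_rods_2_on_line:
  assumes "x \<in> strut_rods (a, d, b, e, t, s) 2"
  obtains \<sigma> where "x = b + \<sigma> *\<^sub>R e"
  using assms convex_hull_points_on_line[of b "($) s" e]
  by (auto simp: strut_rods_def strut_pt2_def[abs_def])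

lemma strut_rods_rigid:
  fixes a d b e :: "real^3" and t s :: "real^4"
  assumes T: "(b - a) \<bullet> (d \<times> e) \<noteq> 0" and S: "saddle_volume s t \<noteq> 0"
  shows "rigid_union {1..6} (strut_rods (a, d, b, e, t, s))"
  unfolding rigid_union_def
proof (intro allI impI)
  define R where "R = strut_rods (a, d, b, e, t, s)"
  define p where "p = strut_pt1 (a, d, b, e, t, s)"
  define q where "q = strut_pt2 (a, d, b, e, t, s)"
  fix u assume adm: "admissible_motion {1..6} R u"
  obtain W V where WV: "\<And>i x. i \<in> {1..6} \<Longrightarrow> x \<in> R i \<Longrightarrow> u i x = W i \<times> x + V i"
    and joint_velocity: "\<And>i j x. i \<in> {1..6} \<Longrightarrow> j \<in> {1..6} \<Longrightarrow> x \<in> R i \<Longrightarrow> x \<in> R j \<Longrightarrow>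
      W i \<times> x + V i = W j \<times> x + V j"
    using admissible_motion_velocities[OF adm] by blast
  have p1: "p k \<in> R 1" and q2: "q k \<in> R 2" for k
    unfolding R_def p_def q_def by (rule strut_pt1_mem_strut_rods strut_pt2_mem_strut_rods)+
  have "((W 2 - W 1) \<times> q k + (V 2 - V 1)) \<bullet> (q k - p k) = 0" for k
  proof -
    obtain i where i: "i \<in> {1..6}" "R i = closed_segment (p k) (q k)"
      using strut_rods_strut unfolding R_def p_def q_def by blast
    have "W 1 \<times> p k + V 1 = W i \<times> p k + V i"
      using joint_velocity[of 1 i "p k"] i p1 by simp
    moreover have "W 2 \<times> q k + V 2 = W i \<times> q k + V i"
      using joint_velocity[of 2 i "q k"] i q2 by simp
    ultimately show ?thesis by (rule strut_velocity_constraint)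
  qed
  then have "((W 2 - W 1) \<times> (b + s$k *\<^sub>R e) + (V 2 - V 1)) \<bullet> ((b + s$k *\<^sub>R e) - (a + t$k *\<^sub>R d)) = 0" for k
    by (simp add: p_def q_def strut_pt1_def strut_pt2_def)
  then obtain \<omega> v where on_line1: "\<And>\<tau>. W 1 \<times> (a + \<tau> *\<^sub>R d) + V 1 = \<omega> \<times> (a + \<tau> *\<^sub>R d) + v"
    and on_line2: "\<And>\<sigma>. W 2 \<times> (b + \<sigma> *\<^sub>R e) + V 2 = \<omega> \<times> (b + \<sigma> *\<^sub>R e) + v"
    using rigid_motion_of_strutted_lines[OF T S] by blast
  have on_R1: "W 1 \<times> x + V 1 = \<omega> \<times> x + v" if "x \<in> R 1" for x
    using that on_line1 unfolding R_def by (elim strut_rods_1_on_line) simp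
  have on_R2: "W 2 \<times> x + V 2 = \<omega> \<times> x + v" if "x \<in> R 2" for x
    using that on_line2 unfolding R_def by (elim strut_rods_2_on_line) simp
  have "u i x = \<omega> \<times> x + v" if i: "i \<in> {1..6}" and x: "x \<in> R i" for i x
  proof -
    consider "i = 1" | "i = 2" | k where "R i = closed_segment (p k) (q k)"
      using strut_rods_cases[OF i] unfolding R_def p_def q_def by blast
    then show ?thesis
    proof cases
      case (3 k)
      have "W i \<times> p k + V i = \<omega> \<times> p k + v"
        using joint_velocity[OF i _ _ p1] on_R1[OF p1] 3 by simp
      moreover have "W i \<times> q k + V i = \<omega> \<times> q k + v"
        using joint_velocity[OF i _ _ q2] on_R2[OF q2] 3 by simp
      ultimately show ?thesis
        using WV[OF i x] rigid_velocity_eq_on_closed_segment x 3 by metis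
    qed (use WV[OF i x] x on_R1 on_R2 in auto)
  qed
  then show "\<exists>\<omega> v. \<forall>i\<in>{1..6}. \<forall>x\<in>R i. u i x = \<omega> \<times> x + v"
    by blast
qed

lemmas real_polynomial_function_coordinate_intros =
  real_polynomial_function.intros(2-4) real_polynomial_function_diff real_polynomial_function_vec_nth
  bounded_linear_fst_comp bounded_linear_snd_comp bounded_linear_ident

lemma negligible_non_skew_strut_lines:
  "negligible ({(a, d, b, e, t, s). (b - a) \<bullet> (d \<times> e) = 0} :: strut_param set)"
proof -
  have d2: "negligible {\<theta> :: strut_param. (case \<theta> of (a, d, b, e, t, s) \<Rightarrow> d$2) = 0}"
    by (rule negligible_zero_set_affine_along[where v = "(0, axis 2 1, 0, 0, 0, 0)" and k = "\<lambda>_. 1"])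
      (simp add: zero_prod_def, simp add: case_prod_unfold real_polynomial_function_coordinate_intros,
       simp add: split_paired_all, simp)
  have de1: "negligible {\<theta> :: strut_param. (case \<theta> of (a, d, b, e, t, s) \<Rightarrow> (d \<times> e)$1) = 0}"
    by (rule negligible_zero_set_affine_along[where v = "(0, 0, 0, axis 3 1, 0, 0)", OF _ _ _ d2])
      (simp add: zero_prod_def, simp add: case_prod_unfold cross_components real_polynomial_function_coordinate_intros,
       simp add: split_paired_all cross_components axis_def algebra_simps)
  have "negligible {\<theta> :: strut_param. (case \<theta> of (a, d, b, e, t, s) \<Rightarrow> (b - a) \<bullet> (d \<times> e)) = 0}"
    by (rule negligible_zero_set_affine_along[where v = "(0, 0, axis 1 1, 0, 0, 0)", OF _ _ _ de1])
      (simp add: zero_prod_def,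
       simp add: case_prod_unfold inner_vec_def sum_3 cross_components real_polynomial_function_coordinate_intros,
       simp add: split_paired_all inner_add_left inner_diff_left inner_axis')
  then show ?thesis by (rule negligible_subset) auto
qed

lemma negligible_saddle_volume_zero:
  "negligible ({(a, d, b, e, t, s). saddle_volume s t = 0} :: strut_param set)"
proof -
  have s2: "negligible {\<theta> :: strut_param. (case \<theta> of (a, d, b, e, t, s) \<Rightarrow> s$2 - s$1) = 0}"
    by (rule negligible_zero_set_affine_along[where v = "(0, 0, 0, 0, 0, axis 2 1)" and k = "\<lambda>_. 1"])
      (simp add: zero_prod_def, simp add: case_prod_unfold real_polynomial_function_coordinate_intros,
       simp add: split_paired_all axis_def, simp)
  have t3: "negligible {\<theta> :: strut_param. (case \<theta> of (a, d, b, e, t, s) \<Rightarrow>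
      (saddle_lift s t 2 - saddle_lift s t 1) \<bullet> ((saddle_lift s t 3 - saddle_lift s t 1) \<times> vector [0, 0, 1])) = 0}"
    by (rule negligible_zero_set_affine_along[where v = "(0, 0, 0, 0, axis 3 1, 0)", OF _ _ _ s2])
      (simp add: zero_prod_def,
       simp add: case_prod_unfold saddle_lift_def inner_vec_def sum_3 cross_components real_polynomial_function_coordinate_intros,
       simp add: split_paired_all saddle_lift_def cross3_simps axis_def)
  have s4: "negligible {\<theta> :: strut_param. (case \<theta> of (a, d, b, e, t, s) \<Rightarrow>
      (saddle_lift s t 2 - saddle_lift s t 1) \<bullet> ((saddle_lift s t 3 - saddle_lift s t 1) \<times> vector [0, 1, s$4])) = 0}"
    by (rule negligible_zero_set_affine_along[where v = "(0, 0, 0, 0, 0, axis 4 1)", OF _ _ _ t3])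
      (simp add: zero_prod_def,
       simp add: case_prod_unfold saddle_lift_def inner_vec_def sum_3 cross_components real_polynomial_function_coordinate_intros,
       simp add: split_paired_all saddle_lift_def cross3_simps axis_def)
  have "negligible {\<theta> :: strut_param. (case \<theta> of (a, d, b, e, t, s) \<Rightarrow> saddle_volume s t) = 0}"
    by (rule negligible_zero_set_affine_along[where v = "(0, 0, 0, 0, axis 4 1, 0)", OF _ _ _ s4])
      (simp add: zero_prod_def,
       simp add: case_prod_unfold saddle_volume_def saddle_lift_def inner_vec_def sum_3 cross_components
         real_polynomial_function_coordinate_intros,
       simp add: split_paired_all saddle_volume_def saddle_lift_def cross3_simps axis_def)
  then show ?thesis by (rule negligible_subset) auto
qed

theorem mainTheorem5:
  shows "negligible {\<theta> :: strut_param. \<not> rigid_union {1..6} (strut_rods \<theta>)}"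
proof (rule negligible_subset)
  show "negligible ({(a, d, b, e, t, s). (b - a) \<bullet> (d \<times> e) = 0} \<union> {(a, d, b, e, t, s). saddle_volume s t = 0}
      :: strut_param set)"
    using negligible_non_skew_strut_lines negligible_saddle_volume_zero by (rule negligible_Un)
  show "{\<theta>. \<not> rigid_union {1..6} (strut_rods \<theta>)}
      \<subseteq> {(a, d, b, e, t, s). (b - a) \<bullet> (d \<times> e) = 0} \<union> {(a, d, b, e, t, s). saddle_volume s t = 0}"
    using strut_rods_rigid by fastforce
qed

end
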